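(* Let $\mathcal{H}$ be a complex Hilbert space and $B,C\in\mathcal{B}(\mathcal{H})$. Then $$w\left(\begin{bmatrix}0 & B\\ C & 0\end{bmatrix}\right)\ge \frac12\max\{\|B\|,\|C\|\}+\frac14\Big|\,\|B+C^*\|-\|B-C^*\|\,\Big|.$$
   Context: $\mathcal{B}(\mathcal{H})$ is the algebra of bounded linear operators on $\mathcal{H}$ with operator norm $\|\cdot\|$; $A^*$ is the adjoint; $w(A)=\sup_{\|x\|=1}|\langle Ax,x\rangle|$ is the numerical radius. The operator matrix $\begin{bmatrix}A&B\\C&D\end{bmatrix}$ acts on $\mathcal{H}\oplus\mathcal{H}$ by $(x_1,x_2)\mapsto(Ax_1+Bx_2,\,Cx_1+Dx_2)$; $0$ denotes the zero operator. *)

theory Defs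
  imports "HOL-Analysis.Analysis"
begin

class complex_vector = real_vector +
  fixes scaleC :: "complex \<Rightarrow> 'a \<Rightarrow> 'a" (infixr \<open>*\<^sub>C\<close> 75)
  assumes scaleC_add_right: "scaleC a (x + y) = scaleC a x + scaleC a y"
    and scaleC_add_left: "scaleC (a + b) x = scaleC a x + scaleC b x"
    and scaleC_scaleC: "scaleC a (scaleC b x) = scaleC (a * b) x"
    and scaleC_one: "scaleC 1 x = x"
    and scaleR_scaleC: "scaleR r x = scaleC (complex_of_real r) x"

class complex_inner = complex_vector + real_normed_vector +
  fixes cinner :: "'a \<Rightarrow> 'a \<Rightarrow> complex"
  assumes cinner_commute: "cinner x y = cnj (cinner y x)"
    and cinner_add_left: "cinner (x + y) z = cinner x z + cinner y z"
    and cinner_scaleC_left: "cinner (scaleC r x) y = cnj r * cinner x y"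
    and cinner_ge_zero: "0 \<le> Re (cinner x x)"
    and cinner_eq_zero_iff: "cinner x x = 0 \<longleftrightarrow> x = 0"
    and norm_eq_sqrt_cinner: "norm x = sqrt (Re (cinner x x))"

class chilbert_space = complex_inner + complete_space

lemma Re_cinner_self: "Re (cinner x x) = (norm x)\<^sup>2" for x :: "'a::complex_inner"
  using norm_eq_sqrt_cinner[of x] cinner_ge_zero[of x] by simp

lemma Im_cinner_self: "Im (cinner x x) = 0" for x :: "'a::complex_inner"
  using cinner_commute[of x x] by (metis cnj.sel(2) neg_equal_zero)

lemma cinner_self_eq: "cinner x x = complex_of_real ((norm x)\<^sup>2)" for x :: "'a::complex_inner"
  by (simp add: complex_eq_iff Re_cinner_self Im_cinner_self)

text \<open>The complex numbers form a complex Hilbert space (consistency of the class).\<close>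
instantiation complex :: chilbert_space
begin
definition scaleC_complex_def: "scaleC a (x::complex) = a * x"
definition cinner_complex_def: "cinner (x::complex) y = cnj x * y"
instance
proof
  fix x y z :: complex and a b :: complex and r :: real
  show "a *\<^sub>C (x + y) = a *\<^sub>C x + a *\<^sub>C y" by (simp add: scaleC_complex_def algebra_simps)
  show "(a + b) *\<^sub>C x = a *\<^sub>C x + b *\<^sub>C x" by (simp add: scaleC_complex_def algebra_simps)
  show "a *\<^sub>C b *\<^sub>C x = (a * b) *\<^sub>C x" by (simp add: scaleC_complex_def)
  show "1 *\<^sub>C x = x" by (simp add: scaleC_complex_def)
  show "r *\<^sub>R x = complex_of_real r *\<^sub>C x" by (simp add: scaleC_complex_def scaleR_conv_of_real)
  show "cinner x y = cnj (cinner y x)" by (simp add: cinner_complex_def)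
  show "cinner (x + y) z = cinner x z + cinner y z" by (simp add: cinner_complex_def algebra_simps)
  show "cinner (a *\<^sub>C x) y = cnj a * cinner x y" by (simp add: cinner_complex_def scaleC_complex_def)
  show "0 \<le> Re (cinner x x)" by (simp add: cinner_complex_def)
  show "(cinner x x = 0) = (x = 0)" by (simp add: cinner_complex_def)
  show "norm x = sqrt (Re (cinner x x))"
    by (simp add: cinner_complex_def cmod_def power2_eq_square)
qed
end

text \<open>Orthogonal direct sum \<open>H \<oplus> K\<close>, modelled as the product type.\<close>
instantiation prod :: (complex_inner, complex_inner) complex_inner
begin
definition scaleC_prod_def: "scaleC a (x :: 'a \<times> 'b) = (scaleC a (fst x), scaleC a (snd x))"
definition cinner_prod_def:
  "cinner (x :: 'a \<times> 'b) y = cinner (fst x) (fst y) + cinner (snd x) (snd y)"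
instance
proof
  fix x y z :: "'a \<times> 'b" and a b :: complex and r :: real
  show "a *\<^sub>C (x + y) = a *\<^sub>C x + a *\<^sub>C y" by (simp add: scaleC_prod_def scaleC_add_right)
  show "(a + b) *\<^sub>C x = a *\<^sub>C x + b *\<^sub>C x" by (simp add: scaleC_prod_def scaleC_add_left)
  show "a *\<^sub>C b *\<^sub>C x = (a * b) *\<^sub>C x" by (simp add: scaleC_prod_def scaleC_scaleC)
  show "1 *\<^sub>C x = x" by (simp add: scaleC_prod_def scaleC_one)
  show "r *\<^sub>R x = complex_of_real r *\<^sub>C x"
    by (simp add: scaleC_prod_def scaleR_scaleC scaleR_prod_def)
  show "cinner x y = cnj (cinner y x)"
    by (simp add: cinner_prod_def cinner_commute[of "fst x"] cinner_commute[of "snd x"])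
  show "cinner (x + y) z = cinner x z + cinner y z" by (simp add: cinner_prod_def cinner_add_left)
  show "cinner (a *\<^sub>C x) y = cnj a * cinner x y"
    by (simp add: cinner_prod_def scaleC_prod_def cinner_scaleC_left algebra_simps)
  show "0 \<le> Re (cinner x x)" by (simp add: cinner_prod_def Re_cinner_self)
  show "(cinner x x = 0) = (x = 0)"
  proof -
    have "cinner x x = complex_of_real ((norm (fst x))\<^sup>2 + (norm (snd x))\<^sup>2)"
      by (simp add: cinner_prod_def cinner_self_eq)
    then show ?thesis
      by (simp add: prod_eq_iff add_nonneg_eq_0_iff del: of_real_add)
  qed
  show "norm x = sqrt (Re (cinner x x))"
    by (simp add: cinner_prod_def Re_cinner_self norm_prod_def)
qed
end

text \<open>\<open>T \<in> B(H, K)\<close>: complex-linear and bounded.  The operator norm is the library's \<open>onorm\<close>.\<close>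
definition bounded_clinear :: "('a::complex_inner \<Rightarrow> 'b::complex_inner) \<Rightarrow> bool" where
  "bounded_clinear T \<longleftrightarrow>
     (\<forall>x y. T (x + y) = T x + T y) \<and> (\<forall>c x. T (c *\<^sub>C x) = c *\<^sub>C T x) \<and>
     (\<exists>K. \<forall>x. norm (T x) \<le> norm x * K)"

definition cadjoint :: "('a::complex_inner \<Rightarrow> 'b::complex_inner) \<Rightarrow> 'b \<Rightarrow> 'a" where
  "cadjoint T = (\<lambda>y. THE z. \<forall>x. cinner (T x) y = cinner x z)"

text \<open>Numerical radius \<open>w(A) = sup_{\<parallel>x\<parallel>=1} |\<langle>A x, x\<rangle>|\<close>; the extra \<open>0\<close> only matters
  for the zero space (empty supremum := 0) and is harmless otherwise.\<close>
definition numrad :: "('a::complex_inner \<Rightarrow> 'a) \<Rightarrow> real" where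
  "numrad A = Sup (insert 0 ((\<lambda>x. cmod (cinner (A x) x)) ` {x. norm x = 1}))"

definition opmat :: "('a \<Rightarrow> 'a) \<Rightarrow> ('a \<Rightarrow> 'a) \<Rightarrow> ('a \<Rightarrow> 'a) \<Rightarrow> ('a \<Rightarrow> 'a) \<Rightarrow> 'a \<times> 'a \<Rightarrow> 'a \<times> 'a::complex_inner"
  where "opmat A B C D = (\<lambda>(x1, x2). (A x1 + B x2, C x1 + D x2))"

end

theory Submission
  imports Defs
begin

text \<open>For \<open>T = [0 B; C 0]\<close> one has \<open>\<langle>T(x,y),(x,y)\<rangle> = \<langle>By,x\<rangle> + conj \<langle>C\<^sup>*y,x\<rangle>\<close>: its real part
  is \<open>Re \<langle>(B + C\<^sup>*)y,x\<rangle>\<close> and, after replacing \<open>x\<close> by \<open>i x\<close>, its imaginary part is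
  \<open>Re \<langle>(B - C\<^sup>*)y,x\<rangle>\<close>. Testing with \<open>x\<close> a multiple of \<open>(B \<plusminus> C\<^sup>*)y\<close> gives
  \<open>\<parallel>B \<plusminus> C\<^sup>*\<parallel> \<le> 2 w(T)\<close>. As \<open>2B\<close> and \<open>2C\<^sup>*\<close> are the sum and the difference of \<open>B + C\<^sup>*\<close> and
  \<open>B - C\<^sup>*\<close>, and \<open>\<parallel>C\<parallel> \<le> \<parallel>C\<^sup>*\<parallel>\<close>, both \<open>\<parallel>B\<parallel>\<close> and \<open>\<parallel>C\<parallel>\<close> are at most \<open>(a + b)/2\<close> with
  \<open>a = \<parallel>B + C\<^sup>*\<parallel>\<close>, \<open>b = \<parallel>B - C\<^sup>*\<parallel>\<close>; the claim follows from \<open>(a + b)/2 + |a - b|/2 = max a b \<le> 2 w(T)\<close>.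
  The adjoint comes from the Riesz representation theorem, obtained from the element of
  minimal norm in the closed convex set \<open>{f = 1}\<close>.\<close>

lemma cinner_zero_left [simp]: "cinner 0 y = 0" for y :: "'a::complex_inner"
  using cinner_add_left[of "0::'a" 0 y] by simp

lemma cinner_minus_left [simp]: "cinner (- x) y = - cinner x y" for x :: "'a::complex_inner"
  using cinner_add_left[of x "- x" y] by (simp add: eq_neg_iff_add_eq_0 add.commute)

lemma cinner_diff_left: "cinner (x - z) y = cinner x y - cinner z y" for x :: "'a::complex_inner"
  using cinner_add_left[of x "- z" y] by simp

lemma cinner_add_right: "cinner y (x + z) = cinner y x + cinner y z" for x :: "'a::complex_inner"
  by (metis cinner_add_left cinner_commute complex_cnj_add)

lemma cinner_zero_right [simp]: "cinner y 0 = 0" for y :: "'a::complex_inner"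
  by (metis cinner_commute cinner_zero_left complex_cnj_zero)

lemma cinner_diff_right: "cinner y (x - z) = cinner y x - cinner y z" for x :: "'a::complex_inner"
  by (metis cinner_diff_left cinner_commute complex_cnj_diff)

lemma cinner_scaleC_right: "cinner y (c *\<^sub>C x) = c * cinner y x" for x :: "'a::complex_inner"
  by (metis cinner_scaleC_left cinner_commute complex_cnj_mult complex_cnj_cnj)

lemma cinner_scaleR_left: "cinner (r *\<^sub>R x) y = of_real r * cinner x y" for x :: "'a::complex_inner"
  by (simp add: scaleR_scaleC cinner_scaleC_left)

lemma cinner_scaleR_right: "cinner y (r *\<^sub>R x) = of_real r * cinner y x" for x :: "'a::complex_inner"
  by (simp add: scaleR_scaleC cinner_scaleC_right)

lemmas cinner_simps = cinner_add_left cinner_add_right cinner_diff_left cinner_diff_right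
  cinner_scaleC_left cinner_scaleC_right cinner_scaleR_left cinner_scaleR_right

lemma cinner_ext: "(\<And>x. cinner x a = cinner x b) \<Longrightarrow> a = b" for a :: "'a::complex_inner"
  by (metis cinner_diff_right cinner_eq_zero_iff right_minus_eq)

lemma norm_scaleC: "norm (c *\<^sub>C x) = cmod c * norm x" for x :: "'a::complex_inner"
proof -
  have "(norm (c *\<^sub>C x))\<^sup>2 = Re (cinner (c *\<^sub>C x) (c *\<^sub>C x))"
    by (simp add: Re_cinner_self)
  also have "cinner (c *\<^sub>C x) (c *\<^sub>C x) = (cnj c * c) * cinner x x"
    by (simp add: cinner_simps mult.assoc)
  also have "Re \<dots> = (cmod c * norm x)\<^sup>2"
    by (simp add: cinner_self_eq mult.commute[of "cnj c"] power_mult_distrib flip: complex_norm_square)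
  finally show ?thesis
    by (simp add: power2_eq_iff_nonneg)
qed

lemma norm_diff_projection_squared:
  fixes x y :: "'a::complex_inner"
  assumes "y \<noteq> 0"
  shows "(norm (x - (cinner y x / of_real ((norm y)\<^sup>2)) *\<^sub>C y))\<^sup>2
           = (norm x)\<^sup>2 - (cmod (cinner y x))\<^sup>2 / (norm y)\<^sup>2"
proof -
  define c where "c = cinner y x"
  define n where "n = (norm y)\<^sup>2"
  have "n > 0"
    using assms by (simp add: n_def)
  have "cinner x y = cnj c"
    by (simp add: c_def cinner_commute[of x])
  have "(norm (x - (c / of_real n) *\<^sub>C y))\<^sup>2
          = Re (cinner (x - (c / of_real n) *\<^sub>C y) (x - (c / of_real n) *\<^sub>C y))"
    by (simp add: Re_cinner_self)
  also have "cinner (x - (c / of_real n) *\<^sub>C y) (x - (c / of_real n) *\<^sub>C y)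
               = cinner x x - (c / of_real n) * cinner x y - cnj (c / of_real n) * cinner y x
                 + cnj (c / of_real n) * (c / of_real n) * cinner y y"
    by (simp add: cinner_simps algebra_simps)
  also have "Re \<dots> = (norm x)\<^sup>2 - (cmod c)\<^sup>2 / n"
    using \<open>n > 0\<close> \<open>cinner x y = cnj c\<close>
    by (simp add: cinner_self_eq c_def[symmetric] n_def field_simps power2_eq_square cmod_def)
  finally show ?thesis
    by (simp only: c_def n_def)
qed

lemma cinner_Cauchy_Schwarz: "cmod (cinner x y) \<le> norm x * norm y" for x :: "'a::complex_inner"
proof (cases "y = 0")
  case False
  have "0 \<le> (norm x)\<^sup>2 - (cmod (cinner y x))\<^sup>2 / (norm y)\<^sup>2"
    using norm_diff_projection_squared[OF False, of x] by (metis zero_le_power2)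
  then have "(cmod (cinner y x))\<^sup>2 \<le> (norm x * norm y)\<^sup>2"
    using False by (simp add: field_simps power_mult_distrib)
  then show ?thesis
    by (metis power2_le_imp_le cinner_commute complex_mod_cnj mult_nonneg_nonneg norm_ge_zero)
qed simp

lemma parallelogram_law:
  "(norm (a - b))\<^sup>2 + (norm (a + b))\<^sup>2 = 2 * (norm a)\<^sup>2 + 2 * (norm b)\<^sup>2" for a :: "'a::complex_inner"
proof -
  have "cinner (a - b) (a - b) + cinner (a + b) (a + b) = 2 * cinner a a + 2 * cinner b b"
    by (simp add: cinner_simps algebra_simps)
  then have "Re (cinner (a - b) (a - b) + cinner (a + b) (a + b)) = Re (2 * cinner a a + 2 * cinner b b)"
    by (rule arg_cong)
  then show ?thesis
    by (simp add: Re_cinner_self)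
qed

lemma cinner_eq_zero_if_min_norm:
  fixes v n :: "'a::complex_inner"
  assumes "\<And>c. norm v \<le> norm (v - c *\<^sub>C n)"
  shows "cinner n v = 0"
proof (cases "n = 0")
  case False
  have "(norm v)\<^sup>2 \<le> (norm (v - (cinner n v / of_real ((norm n)\<^sup>2)) *\<^sub>C n))\<^sup>2"
    using assms norm_ge_zero by (blast intro: power_mono)
  then have "(cmod (cinner n v))\<^sup>2 / (norm n)\<^sup>2 \<le> 0"
    using norm_diff_projection_squared[OF False, of v] by linarith
  then show ?thesis
    using False by (simp add: divide_le_0_iff)
qed simp

lemma minimizing_sequence_Cauchy:
  fixes X :: "nat \<Rightarrow> 'a::complex_inner"
  assumes sum: "\<And>m n. 4 * d \<le> (norm (X m + X n))\<^sup>2"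
    and approx: "\<And>n. (norm (X n))\<^sup>2 \<le> d + inverse (Suc n)"
  shows "Cauchy X"
proof (rule CauchyI)
  fix e :: real
  assume "0 < e"
  then obtain N where N: "inverse (Suc N) < e\<^sup>2 / 4"
    using reals_Archimedean[of "e\<^sup>2 / 4"] by auto
  have "norm (X m - X n) < e" if "N \<le> m" "N \<le> n" for m n
  proof -
    have "(norm (X m - X n))\<^sup>2 = 2 * (norm (X m))\<^sup>2 + 2 * (norm (X n))\<^sup>2 - (norm (X m + X n))\<^sup>2"
      using parallelogram_law[of "X m" "X n"] by simp
    also have "\<dots> \<le> 2 * inverse (Suc m) + 2 * inverse (Suc n)"
      using approx[of m] approx[of n] sum[of m n] by simp
    also have "\<dots> \<le> 4 * inverse (Suc N)"
    proof -
      have "inverse (Suc k) \<le> inverse (Suc N)" if "N \<le> k" for k :: nat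
        using that by (intro le_imp_inverse_le) auto
      from this[OF \<open>N \<le> m\<close>] this[OF \<open>N \<le> n\<close>] show ?thesis
        by linarith
    qed
    also have "\<dots> < e\<^sup>2"
      using N by simp
    finally show ?thesis
      using \<open>0 < e\<close> by (simp add: power_less_imp_less_base)
  qed
  then show "\<exists>M. \<forall>m\<ge>M. \<forall>n\<ge>M. norm (X m - X n) < e"
    by blast
qed

lemma closed_convex_has_min_norm:
  fixes S :: "'a::chilbert_space set"
  assumes "closed S" "convex S" "S \<noteq> {}"
  shows "\<exists>v\<in>S. \<forall>x\<in>S. norm v \<le> norm x"
proof -
  define d where "d = Inf ((\<lambda>x. (norm x)\<^sup>2) ` S)"
  have bdd: "bdd_below ((\<lambda>x. (norm x)\<^sup>2) ` S)"
    by (rule bdd_belowI[of _ 0]) auto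
  have d_le: "d \<le> (norm x)\<^sup>2" if "x \<in> S" for x
    unfolding d_def using bdd that by (simp add: cInf_lower)
  have "\<exists>x\<in>S. (norm x)\<^sup>2 < d + inverse (Suc n)" for n
    using cInf_less_iff[OF _ bdd, of "d + inverse (Suc n)"] \<open>S \<noteq> {}\<close> by (simp add: d_def)
  then obtain X where X: "\<And>n. X n \<in> S" and X_approx: "\<And>n. (norm (X n))\<^sup>2 < d + inverse (Suc n)"
    by metis
  have "4 * d \<le> (norm (X m + X n))\<^sup>2" for m n
  proof -
    have "(1/2) *\<^sub>R X m + (1/2) *\<^sub>R X n \<in> S"
      using \<open>convex S\<close> X by (intro convexD) auto
    from d_le[OF this] show ?thesis
      by (simp add: power_divide flip: scaleR_right_distrib)
  qed
  then have "Cauchy X"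
    using X_approx less_imp_le by (blast intro: minimizing_sequence_Cauchy)
  then obtain v where lim: "X \<longlonglongrightarrow> v"
    using Cauchy_convergent convergent_def by blast
  have "v \<in> S"
    using \<open>closed S\<close> X lim by (rule closed_sequentially)
  have "(norm v)\<^sup>2 \<le> d"
    using X_approx less_imp_le
    by (intro LIMSEQ_le[OF tendsto_power[OF tendsto_norm[OF lim]] LIMSEQ_inverse_real_of_nat_add]) auto
  then have "norm v \<le> norm x" if "x \<in> S" for x
    using d_le[OF that] by (simp add: power2_le_imp_le)
  with \<open>v \<in> S\<close> show ?thesis
    by blast
qed

lemma bounded_clinear_add: "bounded_clinear T \<Longrightarrow> T (x + y) = T x + T y"
  by (simp add: bounded_clinear_def)

lemma bounded_clinear_scaleC: "bounded_clinear T \<Longrightarrow> T (c *\<^sub>C x) = c *\<^sub>C T x"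
  by (simp add: bounded_clinear_def)

lemma bounded_clinear_intro:
  assumes "\<And>x y. T (x + y) = T x + T y" "\<And>c x. T (c *\<^sub>C x) = c *\<^sub>C T x"
    and "\<And>x. norm (T x) \<le> norm x * K"
  shows "bounded_clinear T"
  using assms unfolding bounded_clinear_def by blast

lemma bounded_clinear_bound:
  assumes "bounded_clinear T"
  obtains K where "0 \<le> K" "\<And>x. norm (T x) \<le> norm x * K"
proof -
  obtain K where K: "\<And>x. norm (T x) \<le> norm x * K"
    using assms by (auto simp: bounded_clinear_def)
  have "norm (T x) \<le> norm x * max K 0" for x
    using K[of x] by (metis max.cobounded1 mult_left_mono norm_ge_zero order_trans)
  then show ?thesis
    using that[of "max K 0"] by simp
qed

lemma bounded_clinear_imp_bounded_linear:
  assumes "bounded_clinear T"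
  shows "bounded_linear T"
proof -
  obtain K where "\<And>x. norm (T x) \<le> norm x * K"
    using assms by (auto simp: bounded_clinear_def)
  then show ?thesis
    by (intro bounded_linear_intro)
      (auto simp: assms bounded_clinear_add bounded_clinear_scaleC scaleR_scaleC)
qed

lemma riesz_representation:
  fixes f :: "'a::chilbert_space \<Rightarrow> complex"
  assumes "bounded_clinear f"
  shows "\<exists>z. \<forall>x. f x = cinner z x"
proof (cases "\<forall>x. f x = 0")
  case True
  then show ?thesis
    by (metis cinner_zero_left)
next
  case False
  then obtain x0 where "f x0 \<noteq> 0"
    by blast
  interpret f: bounded_linear f
    using assms by (rule bounded_clinear_imp_bounded_linear)
  have f_scaleC: "f (c *\<^sub>C x) = c * f x" for c x
    using bounded_clinear_scaleC[OF assms] by (simp add: scaleC_complex_def)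
  define S where "S = {x. f x = 1}"
  have "closed S"
    unfolding S_def using f.continuous_on[OF continuous_on_id] by (rule closed_Collect_eq) simp
  moreover have "convex S"
  proof (rule convexI)
    fix x y and u v :: real
    assume "x \<in> S" "y \<in> S" "u + v = 1"
    then show "u *\<^sub>R x + v *\<^sub>R y \<in> S"
      by (simp add: S_def f.add f.scaleR flip: scaleR_add_left)
  qed
  moreover have "(1 / f x0) *\<^sub>C x0 \<in> S"
    using \<open>f x0 \<noteq> 0\<close> by (simp add: S_def f_scaleC)
  then have "S \<noteq> {}"
    by blast
  ultimately obtain v where "v \<in> S" and v_min: "\<And>x. x \<in> S \<Longrightarrow> norm v \<le> norm x"
    by (metis closed_convex_has_min_norm)
  have orth: "cinner v n = 0" if "f n = 0" for n
  proof -
    have "norm v \<le> norm (v - c *\<^sub>C n)" for c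
      using \<open>v \<in> S\<close> that by (intro v_min) (simp add: S_def f.diff f_scaleC)
    then show ?thesis
      by (metis cinner_eq_zero_if_min_norm cinner_commute complex_cnj_zero)
  qed
  have "v \<noteq> 0"
    using \<open>v \<in> S\<close> by (auto simp: S_def)
  have "f x = cinner ((1 / (norm v)\<^sup>2) *\<^sub>R v) x" for x
  proof -
    have "f (x - f x *\<^sub>C v) = 0"
      using \<open>v \<in> S\<close> by (simp add: S_def f.diff f_scaleC)
    then have "cinner v x = f x * of_real ((norm v)\<^sup>2)"
      using orth by (force simp: cinner_simps cinner_self_eq)
    then show ?thesis
      using \<open>v \<noteq> 0\<close> by (simp add: cinner_scaleR_left field_simps)
  qed
  then show ?thesis
    by blast
qed

lemma norm_le_if_adjoint_bound:
  assumes adj: "\<And>x y. cinner (T x) y = cinner x (S y)"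
    and bound: "\<And>y. norm (S y) \<le> K * norm y" and "0 \<le> K"
  shows "norm (T x) \<le> K * norm x"
proof -
  have "(norm (T x))\<^sup>2 = Re (cinner x (S (T x)))"
    by (simp add: Re_cinner_self flip: adj)
  also have "\<dots> \<le> norm x * norm (S (T x))"
    using complex_Re_le_cmod cinner_Cauchy_Schwarz by (rule order_trans)
  also have "\<dots> \<le> norm x * (K * norm (T x))"
    by (simp add: bound mult_left_mono)
  finally have "norm (T x) * norm (T x) \<le> norm (T x) * (K * norm x)"
    by (simp add: power2_eq_square algebra_simps)
  then show ?thesis
    using \<open>0 \<le> K\<close> by (cases "T x = 0") auto
qed

lemma cinner_cadjoint:
  fixes T :: "'a::chilbert_space \<Rightarrow> 'b::complex_inner"
  assumes "bounded_clinear T"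
  shows "cinner (T x) y = cinner x (cadjoint T y)"
proof -
  obtain K where K: "\<And>x. norm (T x) \<le> norm x * K"
    using bounded_clinear_bound[OF assms] by blast
  have "bounded_clinear (\<lambda>x. cinner y (T x))"
  proof (rule bounded_clinear_intro)
    show "cinner y (T (x + x')) = cinner y (T x) + cinner y (T x')" for x x'
      by (simp add: bounded_clinear_add[OF assms] cinner_add_right)
    show "cinner y (T (c *\<^sub>C x)) = c *\<^sub>C cinner y (T x)" for c x
      by (simp add: bounded_clinear_scaleC[OF assms] cinner_scaleC_right scaleC_complex_def)
    show "norm (cinner y (T x)) \<le> norm x * (norm y * K)" for x
      using cinner_Cauchy_Schwarz[of y "T x"] mult_left_mono[OF K[of x], of "norm y"]
      by (simp add: algebra_simps)
  qed
  then obtain z where z: "\<And>x. cinner y (T x) = cinner z x"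
    using riesz_representation by blast
  have z_adj: "\<forall>x. cinner (T x) y = cinner x z"
    by (metis z cinner_commute)
  moreover have "z' = z" if "\<forall>x. cinner (T x) y = cinner x z'" for z'
    using that z_adj by (metis cinner_ext)
  ultimately have "\<forall>x. cinner (T x) y = cinner x (THE z. \<forall>x. cinner (T x) y = cinner x z)"
    by (rule theI)
  then show ?thesis
    unfolding cadjoint_def by blast
qed

lemma cinner_cadjoint_left:
  fixes T :: "'a::chilbert_space \<Rightarrow> 'b::complex_inner"
  assumes "bounded_clinear T"
  shows "cinner (cadjoint T y) x = cinner y (T x)"
  by (metis assms cinner_cadjoint cinner_commute)

lemma bounded_clinear_cadjoint:
  fixes T :: "'a::chilbert_space \<Rightarrow> 'b::complex_inner"
  assumes "bounded_clinear T"
  shows "bounded_clinear (cadjoint T)"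
proof -
  obtain K where "0 \<le> K" and K: "\<And>x. norm (T x) \<le> norm x * K"
    using bounded_clinear_bound[OF assms] by blast
  show ?thesis
  proof (rule bounded_clinear_intro)
    show "cadjoint T (x + y) = cadjoint T x + cadjoint T y" for x y
      by (rule cinner_ext) (simp add: cinner_cadjoint[OF assms, symmetric] cinner_add_right)
    show "cadjoint T (c *\<^sub>C x) = c *\<^sub>C cadjoint T x" for c x
      by (rule cinner_ext) (simp add: cinner_cadjoint[OF assms, symmetric] cinner_scaleC_right)
    show "norm (cadjoint T y) \<le> norm y * K" for y
      using norm_le_if_adjoint_bound[OF cinner_cadjoint_left[OF assms] _ \<open>0 \<le> K\<close>] K
      by (simp add: mult.commute)
  qed
qed

lemma scaleC_zero_right [simp]: "c *\<^sub>C (0::'a::complex_vector) = 0"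
  using scaleC_add_right[of c "0::'a" 0] by simp

lemma bounded_clinear_zero: "bounded_clinear (\<lambda>_. 0)"
  by (rule bounded_clinear_intro[of _ 0]) simp_all

lemma bounded_clinear_bound_fst_snd:
  assumes "bounded_clinear T"
  obtains K where "\<And>x. norm (T (fst x)) \<le> norm x * K" "\<And>x. norm (T (snd x)) \<le> norm x * K"
proof -
  obtain K where "0 \<le> K" and K: "\<And>x. norm (T x) \<le> norm x * K"
    using bounded_clinear_bound[OF assms] by blast
  show ?thesis
  proof (rule that)
    show "norm (T (fst x)) \<le> norm x * K" for x
      using K[of "fst x"] mult_right_mono[OF norm_fst_le[of "fst x" "snd x"] \<open>0 \<le> K\<close>] by simp
    show "norm (T (snd x)) \<le> norm x * K" for x
      using K[of "snd x"] mult_right_mono[OF norm_snd_le[of "snd x" "fst x"] \<open>0 \<le> K\<close>] by simp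
  qed
qed

lemma bounded_clinear_opmat:
  fixes A B C D :: "'a::complex_inner \<Rightarrow> 'a"
  assumes "bounded_clinear A" "bounded_clinear B" "bounded_clinear C" "bounded_clinear D"
  shows "bounded_clinear (opmat A B C D)"
proof -
  obtain KA KB KC KD where
    KA: "\<And>x :: 'a \<times> 'a. norm (A (fst x)) \<le> norm x * KA" and
    KB: "\<And>x :: 'a \<times> 'a. norm (B (snd x)) \<le> norm x * KB" and
    KC: "\<And>x :: 'a \<times> 'a. norm (C (fst x)) \<le> norm x * KC" and
    KD: "\<And>x :: 'a \<times> 'a. norm (D (snd x)) \<le> norm x * KD"
    by (metis assms bounded_clinear_bound_fst_snd)
  have "norm (opmat A B C D x) \<le> norm x * (KA + KB + KC + KD)" for x
    using norm_Pair_le[of "A (fst x) + B (snd x)" "C (fst x) + D (snd x)"]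
      norm_triangle_ineq[of "A (fst x)" "B (snd x)"] norm_triangle_ineq[of "C (fst x)" "D (snd x)"]
      KA[of x] KB[of x] KC[of x] KD[of x]
    by (simp add: opmat_def case_prod_unfold algebra_simps)
  then show ?thesis
    by (intro bounded_clinear_intro[of _ "KA + KB + KC + KD"])
      (auto simp: opmat_def scaleC_prod_def assms[THEN bounded_clinear_add]
        assms[THEN bounded_clinear_scaleC] scaleC_add_right)
qed

lemma bdd_above_numerical_range:
  assumes "bounded_clinear T"
  shows "bdd_above (insert 0 ((\<lambda>x. cmod (cinner (T x) x)) ` {x. norm x = 1}))"
proof -
  obtain K where K: "\<And>x. norm (T x) \<le> norm x * K"
    using bounded_clinear_bound[OF assms] by blast
  have "cmod (cinner (T x) x) \<le> K" if "norm x = 1" for x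
    using cinner_Cauchy_Schwarz[of "T x" x] K[of x] that by simp
  then show ?thesis
    by (intro bdd_aboveI[of _ "max 0 K"]) (auto simp: le_max_iff_disj)
qed

lemma numrad_nonneg: "bounded_clinear T \<Longrightarrow> 0 \<le> numrad T"
  unfolding numrad_def by (intro cSup_upper bdd_above_numerical_range) simp_all

lemma cmod_cinner_le_numrad:
  assumes "bounded_clinear T"
  shows "cmod (cinner (T x) x) \<le> numrad T * (norm x)\<^sup>2"
proof (cases "x = 0")
  case False
  define r where "r = 1 / norm x"
  have "T (r *\<^sub>R x) = r *\<^sub>R T x"
    using assms by (simp add: scaleR_scaleC bounded_clinear_scaleC)
  then have "cinner (T (r *\<^sub>R x)) (r *\<^sub>R x) = of_real (r\<^sup>2) * cinner (T x) x"
    by (simp add: cinner_scaleR_left cinner_scaleR_right power2_eq_square)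
  moreover have "norm (r *\<^sub>R x) = 1"
    using False by (simp add: r_def)
  then have "cmod (cinner (T (r *\<^sub>R x)) (r *\<^sub>R x)) \<le> numrad T"
    unfolding numrad_def using bdd_above_numerical_range[OF assms] by (intro cSup_upper) auto
  ultimately have "r\<^sup>2 * cmod (cinner (T x) x) \<le> numrad T"
    by (simp add: norm_mult norm_power)
  then show ?thesis
    using False by (simp add: r_def field_simps)
qed simp

lemma cinner_offdiag_opmat:
  fixes B C :: "'a::chilbert_space \<Rightarrow> 'a"
  assumes "bounded_clinear C"
  shows "cinner (opmat (\<lambda>_. 0) B C (\<lambda>_. 0) (x, y)) (x, y)
           = cinner (B y) x + cnj (cinner (cadjoint C y) x)"
  by (simp add: opmat_def cinner_prod_def cinner_cadjoint[OF assms] cinner_commute[of x])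

lemma Re_cinner_add_cadjoint_le_numrad:
  fixes B C :: "'a::chilbert_space \<Rightarrow> 'a"
  assumes "bounded_clinear B" "bounded_clinear C"
  shows "Re (cinner (B y + cadjoint C y) x)
           \<le> numrad (opmat (\<lambda>_. 0) B C (\<lambda>_. 0)) * ((norm x)\<^sup>2 + (norm y)\<^sup>2)"
proof -
  let ?T = "opmat (\<lambda>_. 0) B C (\<lambda>_. 0)"
  have T: "bounded_clinear ?T"
    by (intro bounded_clinear_opmat assms bounded_clinear_zero)
  have "Re (cinner (B y + cadjoint C y) x) = Re (cinner (?T (x, y)) (x, y))"
    by (simp add: cinner_offdiag_opmat[OF assms(2)] cinner_add_left)
  also have "\<dots> \<le> numrad ?T * (norm (x, y))\<^sup>2"
    using complex_Re_le_cmod cmod_cinner_le_numrad[OF T] by (rule order_trans)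
  finally show ?thesis
    by (simp add: norm_Pair)
qed

lemma Re_cinner_diff_cadjoint_le_numrad:
  fixes B C :: "'a::chilbert_space \<Rightarrow> 'a"
  assumes "bounded_clinear B" "bounded_clinear C"
  shows "Re (cinner (B y - cadjoint C y) x)
           \<le> numrad (opmat (\<lambda>_. 0) B C (\<lambda>_. 0)) * ((norm x)\<^sup>2 + (norm y)\<^sup>2)"
proof -
  let ?T = "opmat (\<lambda>_. 0) B C (\<lambda>_. 0)"
  have T: "bounded_clinear ?T"
    by (intro bounded_clinear_opmat assms bounded_clinear_zero)
  have "Re (cinner (B y - cadjoint C y) x) = Im (cinner (?T (\<i> *\<^sub>C x, y)) (\<i> *\<^sub>C x, y))"
    by (simp add: cinner_offdiag_opmat[OF assms(2)] cinner_diff_left cinner_scaleC_right)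
  also have "\<dots> \<le> numrad ?T * (norm (\<i> *\<^sub>C x, y))\<^sup>2"
    using abs_Im_le_cmod[of "cinner (?T (\<i> *\<^sub>C x, y)) (\<i> *\<^sub>C x, y)"]
      cmod_cinner_le_numrad[OF T, of "(\<i> *\<^sub>C x, y)"] by linarith
  finally show ?thesis
    by (simp add: norm_Pair norm_scaleC)
qed

lemma onorm_le_if_Re_cinner_bound:
  fixes F :: "'a::real_normed_vector \<Rightarrow> 'b::complex_inner"
  assumes "bounded_linear F" "0 \<le> W"
    and bound: "\<And>x y. Re (cinner (F y) x) \<le> W * ((norm x)\<^sup>2 + (norm y)\<^sup>2)"
  shows "onorm F \<le> 2 * W"
proof (rule onorm_bound)
  show "norm (F y) \<le> 2 * W * norm y" for y
  proof (cases "F y = 0")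
    case False
    then have "y \<noteq> 0"
      using linear_0[OF bounded_linear.linear[OF \<open>bounded_linear F\<close>]] by auto
    define t where "t = norm y / norm (F y)"
    have "Re (cinner (F y) (t *\<^sub>R F y)) = norm y * norm (F y)"
      using False by (simp add: t_def cinner_scaleR_right cinner_self_eq power2_eq_square)
    moreover have "(norm (t *\<^sub>R F y))\<^sup>2 = (norm y)\<^sup>2"
      using False by (simp add: t_def)
    ultimately have "norm y * norm (F y) \<le> norm y * (2 * W * norm y)"
      using bound[of y "t *\<^sub>R F y"] by (simp add: algebra_simps power2_eq_square)
    then show ?thesis
      using \<open>y \<noteq> 0\<close> by simp
  qed (simp add: \<open>0 \<le> W\<close>)
qed (simp add: \<open>0 \<le> W\<close>)

lemma onorm_le_half_sum:
  assumes "bounded_linear D" "bounded_linear E" "\<And>x. 2 *\<^sub>R A x = D x + E x"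
  shows "onorm A \<le> (onorm D + onorm E) / 2"
proof (rule onorm_bound)
  show "0 \<le> (onorm D + onorm E) / 2"
    using onorm_pos_le[OF assms(1)] onorm_pos_le[OF assms(2)] by simp
  show "norm (A x) \<le> (onorm D + onorm E) / 2 * norm x" for x
  proof -
    have "norm (2 *\<^sub>R A x) \<le> norm (D x) + norm (E x)"
      using norm_triangle_ineq[of "D x" "E x"] by (simp only: assms(3))
    then have "2 * norm (A x) \<le> norm (D x) + norm (E x)"
      by simp
    also have "\<dots> \<le> onorm D * norm x + onorm E * norm x"
      using assms by (intro add_mono onorm)
    finally show ?thesis
      by (simp add: algebra_simps)
  qed
qed

lemma onorm_le_onorm_cadjoint:
  fixes C :: "'a::chilbert_space \<Rightarrow> 'b::complex_inner"
  assumes "bounded_clinear C"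
  shows "onorm C \<le> onorm (cadjoint C)"
proof -
  have adj: "bounded_linear (cadjoint C)"
    using assms by (intro bounded_clinear_imp_bounded_linear bounded_clinear_cadjoint)
  show ?thesis
    using cinner_cadjoint[OF assms] onorm[OF adj] onorm_pos_le[OF adj]
    by (intro onorm_bound norm_le_if_adjoint_bound)
qed

theorem mainTheorem2:
  fixes B C :: "'a::chilbert_space \<Rightarrow> 'a"
  assumes "bounded_clinear B" and "bounded_clinear C"
  shows "numrad (opmat (\<lambda>_. 0) B C (\<lambda>_. 0)) \<ge>
           1/2 * max (onorm B) (onorm C)
           + 1/4 * \<bar>onorm (\<lambda>x. B x + cadjoint C x) - onorm (\<lambda>x. B x - cadjoint C x)\<bar>"
proof -
  let ?w = "numrad (opmat (\<lambda>_. 0) B C (\<lambda>_. 0))"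
  let ?a = "onorm (\<lambda>x. B x + cadjoint C x)" and ?b = "onorm (\<lambda>x. B x - cadjoint C x)"
  have B: "bounded_linear B" and Cadj: "bounded_linear (cadjoint C)"
    using assms by (simp_all add: bounded_clinear_imp_bounded_linear bounded_clinear_cadjoint)
  have "0 \<le> ?w"
    using assms by (intro numrad_nonneg bounded_clinear_opmat bounded_clinear_zero)
  have "?a \<le> 2 * ?w"
    using assms by (intro onorm_le_if_Re_cinner_bound bounded_linear_add B Cadj \<open>0 \<le> ?w\<close>
        Re_cinner_add_cadjoint_le_numrad)
  moreover have "?b \<le> 2 * ?w"
    using assms by (intro onorm_le_if_Re_cinner_bound bounded_linear_sub B Cadj \<open>0 \<le> ?w\<close>
        Re_cinner_diff_cadjoint_le_numrad)
  moreover have "onorm B \<le> (?a + ?b) / 2"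
    by (intro onorm_le_half_sum bounded_linear_add bounded_linear_sub B Cadj) (simp add: scaleR_2)
  moreover have "onorm (cadjoint C) \<le> (?a + onorm (\<lambda>x. cadjoint C x - B x)) / 2"
    by (intro onorm_le_half_sum bounded_linear_add bounded_linear_sub B Cadj) (simp add: scaleR_2)
  then have "onorm C \<le> (?a + ?b) / 2"
    using onorm_le_onorm_cadjoint[OF assms(2)] onorm_neg[of "\<lambda>x. B x - cadjoint C x"] by simp
  ultimately show ?thesis
    by (auto simp: max_def abs_real_def field_simps)
qed

end
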